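(* Let $X$ be a complete CAT(0) space, $T_n:X\to X$ for every $n\in\mathbb{N}$, and $(\gamma_n)$ a sequence of positive reals with $\sum_{n=0}^\infty\gamma_n^2=\infty$. Assume that $(T_n)$ is jointly $(P_2)$ with respect to $(\gamma_n)$ (in particular, this holds if $(T_n)$ is jointly firmly nonexpansive with respect to $(\gamma_n)$) and that $F:=\bigcap_{n\in\mathbb{N}}Fix(T_n)\neq\emptyset$. Let $x\in X$, $x_0:=x$, $x_{n+1}:=T_nx_n$ for all $n$. Then $(x_n)$ $\Delta$-converges to a point of $F$.
   Context: A geodesic space $(X,d)$ is CAT(0) if for all $z\in X$, all geodesics $\gamma:[a,b]\to X$ and all $t\in[0,1]$, $d^2(z,\gamma((1-t)a+tb))\le(1-t)d^2(z,\gamma(a))+td^2(z,\gamma(b))-t(1-t)d^2(\gamma(a),\gamma(b))$. CAT(0) spaces are uniquely geodesic; $(1-t)x+ty$ denotes the point at distance $t\,d(x,y)$ from $x$ on the geodesic from $x$ to $y$. $(T_n)$ is jointly firmly nonexpansive w.r.t. $(\gamma_n)$ if for all $n,m$, $x,y\in X$, $\alpha,\beta\in[0,1]$ with $(1-\alpha)\gamma_n=(1-\beta)\gamma_m$: $d(T_nx,T_my)\le d((1-\alpha)x+\alpha T_nx,(1-\beta)y+\beta T_my)$. $(T_n)$ is jointly $(P_2)$ w.r.t. $(\gamma_n)$ if for all $n,m$ and $x,y\in X$: $\frac1{\gamma_m}\big(d^2(T_nx,T_my)+d^2(y,T_my)-d^2(y,T_nx)\big)\le\frac1{\gamma_n}\big(d^2(x,T_my)-d^2(x,T_nx)-d^2(T_nx,T_my)\big)$.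 $Fix(T)$ is the fixed point set. For a bounded sequence $(u_n)$, an asymptotic center is a minimizer over $X$ of $y\mapsto\limsup_n d(y,u_n)$; a bounded sequence $\Delta$-converges to $x$ if every subsequence has $x$ as its unique asymptotic center. *)

theory Defs
  imports "HOL-Analysis.Analysis"
begin

text \<open>The space X is the whole (nonempty) type 'a of class metric_space;
  completeness is the class complete_space.\<close>

definition geodesic_on :: "real \<Rightarrow> real \<Rightarrow> (real \<Rightarrow> 'a::metric_space) \<Rightarrow> bool" where
  "geodesic_on a b g \<longleftrightarrow> a \<le> b \<and>
     (\<forall>s\<in>{a..b}. \<forall>t\<in>{a..b}. dist (g s) (g t) = \<bar>s - t\<bar>)"

definition geodesic_space :: "'a::metric_space itself \<Rightarrow> bool" where
  "geodesic_space _ \<longleftrightarrow> (\<forall>x y::'a. \<exists>g. geodesic_on 0 (dist x y) g \<and> g 0 = x \<and> g (dist x y) = y)"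

definition CAT0 :: "'a::metric_space itself \<Rightarrow> bool" where
  "CAT0 X \<longleftrightarrow> geodesic_space X \<and>
     (\<forall>(z::'a) g a b t. geodesic_on a b g \<and> 0 \<le> t \<and> t \<le> 1 \<longrightarrow>
        (dist z (g ((1 - t) * a + t * b)))\<^sup>2 \<le>
          (1 - t) * (dist z (g a))\<^sup>2 + t * (dist z (g b))\<^sup>2 - t * (1 - t) * (dist (g a) (g b))\<^sup>2)"

text \<open>(1-t)x + ty: the point at distance t d(x,y) from x on the geodesic from x to y.\<close>
definition cmb :: "real \<Rightarrow> 'a::metric_space \<Rightarrow> 'a \<Rightarrow> 'a" where
  "cmb t x y = (THE z. \<exists>g. geodesic_on 0 (dist x y) g \<and> g 0 = x \<and> g (dist x y) = y \<and>
                          z = g (t * dist x y))"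

definition jointly_FNE :: "(nat \<Rightarrow> 'a::metric_space \<Rightarrow> 'a) \<Rightarrow> (nat \<Rightarrow> real) \<Rightarrow> bool" where
  "jointly_FNE T \<gamma> \<longleftrightarrow> (\<forall>n m x y \<alpha> \<beta>. \<alpha> \<in> {0..1} \<and> \<beta> \<in> {0..1} \<and> (1 - \<alpha>) * \<gamma> n = (1 - \<beta>) * \<gamma> m \<longrightarrow>
      dist (T n x) (T m y) \<le> dist (cmb \<alpha> x (T n x)) (cmb \<beta> y (T m y)))"

definition jointly_P2 :: "(nat \<Rightarrow> 'a::metric_space \<Rightarrow> 'a) \<Rightarrow> (nat \<Rightarrow> real) \<Rightarrow> bool" where
  "jointly_P2 T \<gamma> \<longleftrightarrow> (\<forall>n m x y.
      (1 / \<gamma> m) * ((dist (T n x) (T m y))\<^sup>2 + (dist y (T m y))\<^sup>2 - (dist y (T n x))\<^sup>2)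
      \<le> (1 / \<gamma> n) * ((dist x (T m y))\<^sup>2 - (dist x (T n x))\<^sup>2 - (dist (T n x) (T m y))\<^sup>2))"

definition Fix :: "('a \<Rightarrow> 'a) \<Rightarrow> 'a set" where
  "Fix T = {x. T x = x}"

definition asymptotic_center :: "(nat \<Rightarrow> 'a::metric_space) \<Rightarrow> 'a \<Rightarrow> bool" where
  "asymptotic_center u c \<longleftrightarrow>
     (\<forall>y. limsup (\<lambda>n. ereal (dist c (u n))) \<le> limsup (\<lambda>n. ereal (dist y (u n))))"

definition Delta_converges :: "(nat \<Rightarrow> 'a::metric_space) \<Rightarrow> 'a \<Rightarrow> bool" where
  "Delta_converges u x \<longleftrightarrow> bounded (range u) \<and>
     (\<forall>\<sigma>. strict_mono \<sigma> \<longrightarrow> (\<forall>c. asymptotic_center (u \<circ> \<sigma>) c \<longleftrightarrow> c = x))"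

end

theory Submission
  imports Defs
begin

text \<open>Taking y a common fixed point p and m = n in (P2) gives the Fejer inequality
  d(x(n+1), p)^2 + d(x n, x(n+1))^2 \<le> d(x n, p)^2, so the steps d(x n, x(n+1)) are
  square-summable. Applying (P2) to two consecutive iterations shows that the ratios
  d(x n, x(n+1)) / \<gamma> n decrease; since \<Sum> \<gamma> n^2 = \<infinity> they tend to 0. Applying (P2) to x n
  and an arbitrary point z then shows that eventually T m z is closer to the iterates than z
  by almost d(z, T m z)^2, so every asymptotic centre of a subsequence is a common fixed point.
  Asymptotic centres of bounded sequences exist and are unique in complete CAT(0) spaces
  (midpoint inequality). Finally, Fejer monotonicity makes d(p, x n) convergent for every
  common fixed point p, which forces all subsequences to share the asymptotic centre of the
  whole sequence.\<close>

lemma power2_dist_le_add_dist: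
  fixes y u u' :: "'a::metric_space"
  assumes "dist y u \<le> B" "dist y u' \<le> B"
  shows "(dist y u)\<^sup>2 \<le> (dist y u')\<^sup>2 + 2 * B * dist u u'"
proof -
  have tri: "dist y u \<le> dist y u' + dist u u'"
    by (metis dist_commute dist_triangle add.commute)
  have "(dist y u)\<^sup>2 - (dist y u')\<^sup>2 = (dist y u - dist y u') * (dist y u + dist y u')"
    by (simp add: power2_eq_square algebra_simps)
  also have "\<dots> \<le> dist u u' * (2 * B)"
  proof (cases "dist y u \<le> dist y u'")
    case True
    have "0 \<le> B" using assms(2) zero_le_dist order_trans by blast
    with True show ?thesis
      by (intro order_trans[OF mult_nonpos_nonneg]) auto
  next
    case False
    then show ?thesis
      using tri assms by (intro mult_mono) (auto simp: dist_commute)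
  qed
  finally show ?thesis by (simp add: algebra_simps)
qed

lemma Cauchy_if_power2_dist_le:
  fixes Y :: "nat \<Rightarrow> 'a::metric_space"
  assumes bound: "\<And>j k. (dist (Y j) (Y k))\<^sup>2 \<le> b j + b k" and b: "b \<longlonglongrightarrow> 0"
  shows "Cauchy Y"
proof (rule metric_CauchyI)
  fix e :: real
  assume "e > 0"
  then have "eventually (\<lambda>k. b k < e\<^sup>2 / 2) sequentially"
    using b by (intro order_tendstoD(2)) auto
  then obtain M where M: "\<And>k. k \<ge> M \<Longrightarrow> b k < e\<^sup>2 / 2"
    unfolding eventually_sequentially by blast
  have "dist (Y j) (Y k) < e" if "j \<ge> M" "k \<ge> M" for j k
  proof (rule power2_less_imp_less)
    show "(dist (Y j) (Y k))\<^sup>2 < e\<^sup>2"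
      using bound[of j k] M[OF that(1)] M[OF that(2)] by linarith
  qed (use \<open>e > 0\<close> in simp)
  then show "\<exists>M. \<forall>m\<ge>M. \<forall>n\<ge>M. dist (Y m) (Y n) < e" by blast
qed

lemma limsup_dist_finite:
  fixes v :: "nat \<Rightarrow> 'a::metric_space"
  assumes "bounded (range v)"
  obtains R where "R \<ge> 0" "limsup (\<lambda>n. ereal (dist y (v n))) = ereal R"
proof -
  obtain e where e: "\<And>n. dist y (v n) \<le> e"
    using assms unfolding bounded_any_center[of _ y] by blast
  have up: "limsup (\<lambda>n. ereal (dist y (v n))) \<le> ereal e"
    by (rule Limsup_bounded) (simp add: e)
  have "ereal 0 \<le> liminf (\<lambda>n. ereal (dist y (v n)))"
    by (rule Liminf_bounded) simp
  also have "\<dots> \<le> limsup (\<lambda>n. ereal (dist y (v n)))"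
    by (rule Liminf_le_Limsup) simp
  finally have "0 \<le> limsup (\<lambda>n. ereal (dist y (v n)))"
    by (simp add: zero_ereal_def)
  with up that show ?thesis
    by (cases "limsup (\<lambda>n. ereal (dist y (v n)))") auto
qed

lemma eventually_power2_dist_le_limsup:
  assumes "limsup (\<lambda>k. ereal (dist c (v k))) = ereal R" "\<epsilon> > 0"
  shows "eventually (\<lambda>k. (dist c (v k))\<^sup>2 \<le> (R + \<epsilon>)\<^sup>2) sequentially"
proof -
  have "eventually (\<lambda>k. ereal (dist c (v k)) < ereal (R + \<epsilon>)) sequentially"
    using assms by (intro Limsup_lessD) auto
  then show ?thesis
    by eventually_elim (simp add: power_mono)
qed

lemma power2_le_if_eventually_power2_dist_le:
  assumes "ereal R \<le> limsup (\<lambda>k. ereal (dist w (v k)))" "R \<ge> 0"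
    and "eventually (\<lambda>k. (dist w (v k))\<^sup>2 \<le> C) sequentially"
  shows "R\<^sup>2 \<le> C"
proof -
  have "limsup (\<lambda>k. ereal (dist w (v k))) \<le> ereal (sqrt C)"
    using assms(3) by (rule Limsup_bounded[OF eventually_mono]) (simp add: real_le_rsqrt)
  with assms(1) have "R \<le> sqrt C" by (metis ereal_less_eq(3) order_trans)
  with assms(2) show ?thesis
    by (metis order_trans power_mono real_sqrt_ge_0_iff real_sqrt_pow2)
qed

lemma asymptotic_center_gap_nonpos:
  fixes v :: "nat \<Rightarrow> 'a::metric_space"
  assumes c: "asymptotic_center v c"
    and R: "limsup (\<lambda>k. ereal (dist c (v k))) = ereal R" "R \<ge> 0"
    and gap: "\<And>\<epsilon>. \<epsilon> > 0 \<Longrightarrow> eventually (\<lambda>k. (dist w (v k))\<^sup>2 \<le> (R + \<epsilon>)\<^sup>2 - D) sequentially"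
  shows "D \<le> 0"
proof (rule ccontr)
  assume "\<not> D \<le> 0"
  define \<epsilon> where "\<epsilon> = min 1 (D / (2 * (2 * R + 1)))"
  have \<epsilon>: "0 < \<epsilon>" "\<epsilon> \<le> 1" "\<epsilon> \<le> D / (2 * (2 * R + 1))"
    using \<open>\<not> D \<le> 0\<close> R(2) by (auto simp: \<epsilon>_def)
  then have "\<epsilon> * (2 * R + 1) \<le> D / 2"
    using R(2) by (simp add: field_simps)
  have "\<epsilon>\<^sup>2 \<le> \<epsilon>"
    using \<epsilon> by (simp add: power2_eq_square mult_le_cancel_left1)
  moreover have "(R + \<epsilon>)\<^sup>2 = R\<^sup>2 + \<epsilon> * (2 * R + 1) + (\<epsilon>\<^sup>2 - \<epsilon>)"
    by (simp add: power2_eq_square algebra_simps)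
  ultimately have small: "(R + \<epsilon>)\<^sup>2 \<le> R\<^sup>2 + D / 2"
    using \<open>\<epsilon> * (2 * R + 1) \<le> D / 2\<close> by linarith
  have "ereal R \<le> limsup (\<lambda>k. ereal (dist w (v k)))"
    using c R(1) unfolding asymptotic_center_def by metis
  then have "R\<^sup>2 \<le> (R + \<epsilon>)\<^sup>2 - D"
    using R(2) gap[OF \<epsilon>(1)] by (rule power2_le_if_eventually_power2_dist_le)
  with small \<open>\<not> D \<le> 0\<close> show False by linarith
qed

lemma CAT0_midpoint:
  fixes y z :: "'a::metric_space"
  assumes "CAT0 TYPE('a)"
  obtains m where
    "\<And>q. (dist q m)\<^sup>2 \<le> (dist q y)\<^sup>2 / 2 + (dist q z)\<^sup>2 / 2 - (dist y z)\<^sup>2 / 4"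
proof -
  have cat: "\<And>(q::'a) g a b t. geodesic_on a b g \<Longrightarrow> 0 \<le> t \<Longrightarrow> t \<le> 1 \<Longrightarrow>
      (dist q (g ((1 - t) * a + t * b)))\<^sup>2
      \<le> (1 - t) * (dist q (g a))\<^sup>2 + t * (dist q (g b))\<^sup>2 - t * (1 - t) * (dist (g a) (g b))\<^sup>2"
    using assms unfolding CAT0_def by blast
  obtain g where g: "geodesic_on 0 (dist y z) g" "g 0 = y" "g (dist y z) = z"
    using assms unfolding CAT0_def geodesic_space_def by blast
  have "(dist q (g ((1 - 1/2) * 0 + 1/2 * dist y z)))\<^sup>2 \<le>
      (1 - 1/2) * (dist q (g 0))\<^sup>2 + 1/2 * (dist q (g (dist y z)))\<^sup>2
      - 1/2 * (1 - 1/2) * (dist (g 0) (g (dist y z)))\<^sup>2" for q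
    by (rule cat[OF g(1)]) auto
  with g show ?thesis
    by (intro that[of "g (dist y z / 2)"]) simp
qed

lemma CAT0_asymptotic_center_unique:
  fixes v :: "nat \<Rightarrow> 'a::metric_space"
  assumes cat: "CAT0 TYPE('a)" and bd: "bounded (range v)"
    and c: "asymptotic_center v c" and p: "asymptotic_center v p"
  shows "c = p"
proof -
  obtain R where R: "R \<ge> 0" "limsup (\<lambda>n. ereal (dist c (v n))) = ereal R"
    using limsup_dist_finite[OF bd] by blast
  have "limsup (\<lambda>n. ereal (dist p (v n))) = limsup (\<lambda>n. ereal (dist c (v n)))"
    using c p unfolding asymptotic_center_def by (meson order.antisym)
  with R have Rp: "limsup (\<lambda>n. ereal (dist p (v n))) = ereal R" by simp
  obtain m where m: "\<And>q. (dist q m)\<^sup>2 \<le> (dist q c)\<^sup>2 / 2 + (dist q p)\<^sup>2 / 2 - (dist c p)\<^sup>2 / 4"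
    using CAT0_midpoint[OF cat] by blast
  have "(dist c p)\<^sup>2 / 4 \<le> 0"
  proof (rule asymptotic_center_gap_nonpos[OF c R(2) R(1)])
    fix \<epsilon> :: real
    assume "\<epsilon> > 0"
    with R(2) Rp have
      "eventually (\<lambda>k. (dist c (v k))\<^sup>2 \<le> (R + \<epsilon>)\<^sup>2) sequentially"
      "eventually (\<lambda>k. (dist p (v k))\<^sup>2 \<le> (R + \<epsilon>)\<^sup>2) sequentially"
      by (auto intro: eventually_power2_dist_le_limsup)
    then show "eventually (\<lambda>k. (dist m (v k))\<^sup>2 \<le> (R + \<epsilon>)\<^sup>2 - (dist c p)\<^sup>2 / 4) sequentially"
    proof eventually_elim
      case (elim k)
      with m[of "v k"] show ?case by (simp add: dist_commute)
    qed
  qed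
  then show ?thesis by simp
qed

lemma CAT0_power2_dist_almost_minimizers:
  fixes v :: "nat \<Rightarrow> 'a::metric_space"
  assumes cat: "CAT0 TYPE('a)"
    and r: "r \<ge> 0" "\<And>q. ereal r \<le> limsup (\<lambda>n. ereal (dist q (v n)))"
    and y: "eventually (\<lambda>n. dist y (v n) \<le> r + s) sequentially"
    and y': "eventually (\<lambda>n. dist y' (v n) \<le> r + t) sequentially"
  shows "(dist y y')\<^sup>2 \<le> 2 * ((r + s)\<^sup>2 - r\<^sup>2) + 2 * ((r + t)\<^sup>2 - r\<^sup>2)"
proof -
  obtain m where m: "\<And>q. (dist q m)\<^sup>2 \<le> (dist q y)\<^sup>2 / 2 + (dist q y')\<^sup>2 / 2 - (dist y y')\<^sup>2 / 4"
    using CAT0_midpoint[OF cat] by blast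
  have "eventually (\<lambda>n. (dist m (v n))\<^sup>2 \<le> (r + s)\<^sup>2 / 2 + (r + t)\<^sup>2 / 2 - (dist y y')\<^sup>2 / 4) sequentially"
    using y y'
  proof eventually_elim
    case (elim n)
    then have "(dist y (v n))\<^sup>2 \<le> (r + s)\<^sup>2" "(dist y' (v n))\<^sup>2 \<le> (r + t)\<^sup>2"
      by (simp_all add: power_mono)
    with m[of "v n"] show ?case by (simp add: dist_commute)
  qed
  with r(2) r(1) have "r\<^sup>2 \<le> (r + s)\<^sup>2 / 2 + (r + t)\<^sup>2 / 2 - (dist y y')\<^sup>2 / 4"
    by (rule power2_le_if_eventually_power2_dist_le)
  then show ?thesis by simp
qed

lemma CAT0_Cauchy_almost_minimizers:
  fixes v :: "nat \<Rightarrow> 'a::metric_space"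
  assumes cat: "CAT0 TYPE('a)"
    and r: "r \<ge> 0" "\<And>q. ereal r \<le> limsup (\<lambda>n. ereal (dist q (v n)))"
    and Y: "\<And>k. eventually (\<lambda>n. dist (Y k) (v n) \<le> r + \<delta> k) sequentially"
    and \<delta>: "\<delta> \<longlonglongrightarrow> 0"
  shows "Cauchy Y"
proof (rule Cauchy_if_power2_dist_le)
  show "(dist (Y j) (Y k))\<^sup>2 \<le> 2 * ((r + \<delta> j)\<^sup>2 - r\<^sup>2) + 2 * ((r + \<delta> k)\<^sup>2 - r\<^sup>2)" for j k
    using cat r Y[of j] Y[of k] by (rule CAT0_power2_dist_almost_minimizers)
  have "(\<lambda>k. 2 * ((r + \<delta> k)\<^sup>2 - r\<^sup>2)) \<longlonglongrightarrow> 2 * ((r + 0)\<^sup>2 - r\<^sup>2)"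
    by (intro tendsto_intros \<delta>)
  then show "(\<lambda>k. 2 * ((r + \<delta> k)\<^sup>2 - r\<^sup>2)) \<longlonglongrightarrow> 0"
    by simp
qed

lemma asymptotic_center_if_almost_minimizers_tendsto:
  fixes v :: "nat \<Rightarrow> 'a::metric_space"
  assumes bd: "bounded (range v)"
    and r: "\<And>q. ereal r \<le> limsup (\<lambda>n. ereal (dist q (v n)))"
    and Y: "\<And>k. eventually (\<lambda>n. dist (Y k) (v n) \<le> r + \<delta> k) sequentially"
    and \<delta>: "\<delta> \<longlonglongrightarrow> 0" and c: "Y \<longlonglongrightarrow> c"
  shows "asymptotic_center v c"
proof -
  obtain Rc where Rc: "limsup (\<lambda>n. ereal (dist c (v n))) = ereal Rc"
    using limsup_dist_finite[OF bd, of c] by metis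
  have "Rc \<le> r + \<delta> k + dist c (Y k)" for k
  proof -
    have "eventually (\<lambda>n. ereal (dist c (v n)) \<le> ereal (r + \<delta> k + dist c (Y k))) sequentially"
      using Y[of k]
    proof eventually_elim
      case (elim n)
      with dist_triangle[of c "v n" "Y k"] show ?case by simp
    qed
    then have "limsup (\<lambda>n. ereal (dist c (v n))) \<le> ereal (r + \<delta> k + dist c (Y k))"
      by (rule Limsup_bounded)
    with Rc show ?thesis by simp
  qed
  moreover have "(\<lambda>k. r + \<delta> k + dist c (Y k)) \<longlonglongrightarrow> r + 0 + dist c c"
    by (intro tendsto_intros c \<delta>)
  ultimately have "Rc \<le> r"
    using LIMSEQ_le_const by fastforce
  with Rc r show ?thesis
    unfolding asymptotic_center_def by (metis ereal_less_eq(3) order_trans)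
qed

lemma CAT0_asymptotic_center_exists:
  fixes v :: "nat \<Rightarrow> 'a::complete_space"
  assumes cat: "CAT0 TYPE('a)" and bd: "bounded (range v)"
  obtains c where "asymptotic_center v c"
proof -
  define L where "L y = limsup (\<lambda>n. ereal (dist y (v n)))" for y
  have L_nonneg: "0 \<le> L y" for y
    by (rule limsup_dist_finite[OF bd, of y]) (simp add: L_def)
  obtain R0 where R0: "L (v 0) = ereal R0"
    using limsup_dist_finite[OF bd] unfolding L_def by metis
  have "0 \<le> Inf (range L)"
    using L_nonneg by (auto intro: Inf_greatest)
  moreover have "Inf (range L) \<le> ereal R0"
    using R0 by (metis INF_lower UNIV_I)
  ultimately obtain r where r: "Inf (range L) = ereal r" "r \<ge> 0"
    by (cases "Inf (range L)") auto
  then have r_le: "ereal r \<le> L y" for y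
    by (metis INF_lower UNIV_I)
  define \<delta> where "\<delta> k = inverse (real (Suc k))" for k
  have \<delta>: "\<delta> \<longlonglongrightarrow> 0"
    unfolding \<delta>_def by (rule LIMSEQ_inverse_real_of_nat)
  have "\<exists>y. L y < ereal (r + \<delta> k)" for k
  proof -
    have "Inf (range L) < ereal (r + \<delta> k)"
      using r(1) by (simp add: \<delta>_def)
    then show ?thesis by (auto simp: Inf_less_iff)
  qed
  then obtain Y where Y_lt: "\<And>k. L (Y k) < ereal (r + \<delta> k)"
    by metis
  have Y: "eventually (\<lambda>n. dist (Y k) (v n) \<le> r + \<delta> k) sequentially" for k
  proof -
    have "eventually (\<lambda>n. ereal (dist (Y k) (v n)) < ereal (r + \<delta> k)) sequentially"
      using Y_lt[of k] unfolding L_def by (rule Limsup_lessD)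
    then show ?thesis by eventually_elim simp
  qed
  have "Cauchy Y"
    using cat r(2) r_le[unfolded L_def] Y \<delta> by (rule CAT0_Cauchy_almost_minimizers)
  then obtain c where "Y \<longlonglongrightarrow> c"
    using Cauchy_convergent convergent_def by blast
  with bd r_le[unfolded L_def] Y \<delta> show ?thesis
    by (intro that asymptotic_center_if_almost_minimizers_tendsto)
qed

lemma limsup_dist_subseq_eq:
  assumes "(\<lambda>n. dist p (u n)) \<longlonglongrightarrow> l" "strict_mono \<sigma>"
  shows "limsup (\<lambda>k. ereal (dist p ((u \<circ> \<sigma>) k))) = ereal l"
proof (rule lim_imp_Limsup)
  have "((\<lambda>n. dist p (u n)) \<circ> \<sigma>) \<longlonglongrightarrow> l"
    using assms by (rule LIMSEQ_subseq_LIMSEQ)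
  then show "(\<lambda>k. ereal (dist p ((u \<circ> \<sigma>) k))) \<longlonglongrightarrow> ereal l"
    by (simp add: lim_ereal o_def)
qed simp

lemma CAT0_Delta_converges_if_Fejer_monotone:
  fixes u :: "nat \<Rightarrow> 'a::complete_space"
  assumes cat: "CAT0 TYPE('a)" and bd: "bounded (range u)"
    and Fejer: "\<And>p n. p \<in> F \<Longrightarrow> dist p (u (Suc n)) \<le> dist p (u n)"
    and centers: "\<And>\<sigma> c. strict_mono \<sigma> \<Longrightarrow> asymptotic_center (u \<circ> \<sigma>) c \<Longrightarrow> c \<in> F"
  shows "\<exists>p\<in>F. Delta_converges u p"
proof -
  have bd_subseq: "bounded (range (u \<circ> \<sigma>))" for \<sigma>
    using bd by (rule bounded_subset) auto
  have dist_converges: "\<exists>l. (\<lambda>n. dist p (u n)) \<longlonglongrightarrow> l" if "p \<in> F" for p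
  proof -
    have "decseq (\<lambda>n. dist p (u n))"
      using Fejer[OF that] by (rule decseq_SucI)
    then show ?thesis
      by (rule decseq_convergent[where B = 0]) auto
  qed
  obtain p where p: "asymptotic_center u p"
    using CAT0_asymptotic_center_exists[OF cat bd] by blast
  have "p \<in> F"
    using centers[of id p] p by (simp add: strict_mono_def)
  then obtain lp where lp: "(\<lambda>n. dist p (u n)) \<longlonglongrightarrow> lp"
    using dist_converges by blast
  have p_subseq: "asymptotic_center (u \<circ> \<sigma>) p" if \<sigma>: "strict_mono \<sigma>" for \<sigma>
  proof -
    obtain c where c: "asymptotic_center (u \<circ> \<sigma>) c"
      using CAT0_asymptotic_center_exists[OF cat bd_subseq] by blast
    then obtain lc where lc: "(\<lambda>n. dist c (u n)) \<longlonglongrightarrow> lc"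
      using centers[OF \<sigma>] dist_converges by blast
    have id: "strict_mono (id :: nat \<Rightarrow> nat)" by (simp add: strict_mono_def)
    have "limsup (\<lambda>k. ereal (dist p ((u \<circ> id) k))) \<le> limsup (\<lambda>k. ereal (dist c ((u \<circ> id) k)))"
      using p unfolding asymptotic_center_def by simp
    then have "lp \<le> lc"
      using limsup_dist_subseq_eq[OF lp id] limsup_dist_subseq_eq[OF lc id] by simp
    moreover have "limsup (\<lambda>k. ereal (dist c ((u \<circ> \<sigma>) k))) \<le> limsup (\<lambda>k. ereal (dist p ((u \<circ> \<sigma>) k)))"
      using c unfolding asymptotic_center_def by blast
    then have "lc \<le> lp"
      using limsup_dist_subseq_eq[OF lp \<sigma>] limsup_dist_subseq_eq[OF lc \<sigma>] by simp
    ultimately show ?thesis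
      using c limsup_dist_subseq_eq[OF lp \<sigma>] limsup_dist_subseq_eq[OF lc \<sigma>]
      unfolding asymptotic_center_def by simp
  qed
  have "Delta_converges u p"
    unfolding Delta_converges_def
    using bd CAT0_asymptotic_center_unique[OF cat bd_subseq _ p_subseq] p_subseq by blast
  with \<open>p \<in> F\<close> show ?thesis by blast
qed

locale P2_iteration =
  fixes T :: "nat \<Rightarrow> 'a::metric_space \<Rightarrow> 'a" and \<gamma> :: "nat \<Rightarrow> real" and xs :: "nat \<Rightarrow> 'a"
  assumes gamma_pos: "\<And>n. \<gamma> n > 0"
    and jointly_P2: "jointly_P2 T \<gamma>"
    and iterate_Suc: "\<And>n. xs (Suc n) = T n (xs n)"
begin

abbreviation step :: "nat \<Rightarrow> real" where
  "step n \<equiv> dist (xs n) (xs (Suc n))"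

lemma P2_inequality:
  "(1 / \<gamma> m) * ((dist (T n x) (T m y))\<^sup>2 + (dist y (T m y))\<^sup>2 - (dist y (T n x))\<^sup>2)
   \<le> (1 / \<gamma> n) * ((dist x (T m y))\<^sup>2 - (dist x (T n x))\<^sup>2 - (dist (T n x) (T m y))\<^sup>2)"
  using jointly_P2 unfolding jointly_P2_def by blast

lemma Fejer_step:
  assumes "T n p = p"
  shows "(dist p (xs (Suc n)))\<^sup>2 + (step n)\<^sup>2 \<le> (dist p (xs n))\<^sup>2"
proof -
  have "0 \<le> (1 / \<gamma> n) * ((dist (xs n) p)\<^sup>2 - (step n)\<^sup>2 - (dist (xs (Suc n)) p)\<^sup>2)"
    using P2_inequality[where m = n and n = n and x = "xs n" and y = p] assms
    by (simp add: iterate_Suc dist_commute)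
  with gamma_pos[of n] show ?thesis
    by (simp add: zero_le_divide_iff dist_commute)
qed

lemma dist_fixed_point_decreasing:
  assumes "T n p = p"
  shows "dist p (xs (Suc n)) \<le> dist p (xs n)"
proof (rule power2_le_imp_le)
  show "(dist p (xs (Suc n)))\<^sup>2 \<le> (dist p (xs n))\<^sup>2"
    using Fejer_step[OF assms] zero_le_power2[of "step n"] by linarith
qed simp

lemma bounded_iterates:
  assumes "\<And>n. T n p = p"
  shows "bounded (range xs)"
proof -
  have "dist p (xs n) \<le> dist p (xs 0)" for n
  proof (induction n)
    case (Suc n)
    with dist_fixed_point_decreasing[OF assms] show ?case by (meson order_trans)
  qed simp
  then show ?thesis
    unfolding bounded_def by blast
qed

lemma summable_step_power2:
  assumes "\<And>n. T n p = p"
  shows "summable (\<lambda>n. (step n)\<^sup>2)"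
proof (rule summableI_nonneg_bounded)
  have "(\<Sum>i<N. (step i)\<^sup>2) \<le> (dist p (xs 0))\<^sup>2 - (dist p (xs N))\<^sup>2" for N
  proof (induction N)
    case (Suc N)
    with Fejer_step[OF assms, of N] show ?case by simp
  qed simp
  then show "(\<Sum>i<N. (step i)\<^sup>2) \<le> (dist p (xs 0))\<^sup>2" for N
    by (smt (verit) zero_le_power2)
qed simp

lemma step_ratio_decreasing: "step (Suc n) / \<gamma> (Suc n) \<le> step n / \<gamma> n"
proof -
  define b where "b = step (Suc n)"
  have "2 * (b * (b / \<gamma> (Suc n))) = (1 / \<gamma> (Suc n)) * (2 * b\<^sup>2)"
    by (simp add: power2_eq_square)
  also have "\<dots> \<le> (1 / \<gamma> n) * ((dist (xs n) (xs (Suc (Suc n))))\<^sup>2 - (step n)\<^sup>2 - b\<^sup>2)"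
    using P2_inequality[where m = "Suc n" and n = n and x = "xs n" and y = "xs (Suc n)"]
    by (simp add: iterate_Suc[symmetric] b_def)
  also have "\<dots> \<le> (1 / \<gamma> n) * (2 * step n * b)"
  proof -
    have "dist (xs n) (xs (Suc (Suc n))) \<le> step n + b"
      unfolding b_def by (rule dist_triangle)
    then have "(dist (xs n) (xs (Suc (Suc n))))\<^sup>2 \<le> (step n + b)\<^sup>2"
      by (simp add: power_mono)
    with gamma_pos[of n] show ?thesis
      by (intro mult_left_mono) (simp_all add: power2_sum)
  qed
  also have "\<dots> = 2 * (b * (step n / \<gamma> n))"
    by simp
  finally have le: "b * (b / \<gamma> (Suc n)) \<le> b * (step n / \<gamma> n)"
    by simp
  show ?thesis
  proof (cases "b = 0")
    case True
    with gamma_pos[of n] show ?thesis by (simp add: b_def)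
  next
    case False
    then have "b > 0" by (simp add: b_def)
    with le have "b / \<gamma> (Suc n) \<le> step n / \<gamma> n"
      by (rule mult_left_le_imp_le)
    then show ?thesis by (simp add: b_def)
  qed
qed

lemma step_ratio_tendsto_zero:
  assumes summable: "summable (\<lambda>n. (step n)\<^sup>2)" and not_summable: "\<not> summable (\<lambda>n. (\<gamma> n)\<^sup>2)"
  shows "(\<lambda>n. step n / \<gamma> n) \<longlonglongrightarrow> 0"
proof -
  have "decseq (\<lambda>n. step n / \<gamma> n)"
    by (rule decseq_SucI) (rule step_ratio_decreasing)
  moreover have "\<forall>n. 0 \<le> step n / \<gamma> n"
    using gamma_pos by (simp add: less_imp_le)
  ultimately obtain l where l: "(\<lambda>n. step n / \<gamma> n) \<longlonglongrightarrow> l" "\<forall>n. l \<le> step n / \<gamma> n"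
    by (rule decseq_convergent)
  have "l \<le> 0"
  proof (rule ccontr)
    assume "\<not> l \<le> 0"
    have "norm ((\<gamma> n)\<^sup>2) \<le> (step n)\<^sup>2 / l\<^sup>2" for n
    proof -
      have "l * \<gamma> n \<le> step n"
        using l(2)[rule_format, of n] gamma_pos[of n] by (simp add: pos_le_divide_eq)
      then have "(l * \<gamma> n)\<^sup>2 \<le> (step n)\<^sup>2"
        using \<open>\<not> l \<le> 0\<close> gamma_pos[of n] by (intro power_mono) auto
      with \<open>\<not> l \<le> 0\<close> show ?thesis
        by (simp add: power_mult_distrib pos_le_divide_eq mult.commute)
    qed
    then have "summable (\<lambda>n. (\<gamma> n)\<^sup>2)"
      by (intro summable_comparison_test'[OF summable_divide[OF summable]])
    with not_summable show False by blast
  qed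
  moreover have "0 \<le> l"
    using l(1) by (rule LIMSEQ_le_const) (use \<open>\<forall>n. 0 \<le> step n / \<gamma> n\<close> in blast)
  ultimately show ?thesis
    using l(1) by simp
qed

lemma power2_dist_image_le:
  assumes Bz: "\<And>n. dist z (xs n) \<le> Bz" and Bw: "\<And>n. dist (T m z) (xs n) \<le> Bw"
  shows "(dist (T m z) (xs n))\<^sup>2 \<le> (dist z (xs n))\<^sup>2 - (dist z (T m z))\<^sup>2
           + \<gamma> m * 2 * Bw * (step n / \<gamma> n) + 2 * (Bw + Bz) * step n"
proof -
  define w where "w = T m z"
  have P2: "(1 / \<gamma> m) * ((dist w (xs (Suc n)))\<^sup>2 + (dist z w)\<^sup>2 - (dist z (xs (Suc n)))\<^sup>2)
      \<le> (1 / \<gamma> n) * ((dist w (xs n))\<^sup>2 - (step n)\<^sup>2 - (dist w (xs (Suc n)))\<^sup>2)"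
    using P2_inequality[where m = m and n = n and x = "xs n" and y = z]
    by (simp add: iterate_Suc[symmetric] w_def dist_commute)
  have w_shift: "(dist w (xs n))\<^sup>2 \<le> (dist w (xs (Suc n)))\<^sup>2 + 2 * Bw * step n"
    unfolding w_def by (rule power2_dist_le_add_dist[OF Bw Bw])
  have z_shift: "(dist z (xs (Suc n)))\<^sup>2 \<le> (dist z (xs n))\<^sup>2 + 2 * Bz * step n"
    using power2_dist_le_add_dist[OF Bz Bz, of "Suc n" n] by (simp add: dist_commute)
  have "(dist w (xs n))\<^sup>2 - (step n)\<^sup>2 - (dist w (xs (Suc n)))\<^sup>2 \<le> 2 * Bw * step n"
    using w_shift zero_le_power2[of "step n"] by linarith
  then have "(1 / \<gamma> n) * ((dist w (xs n))\<^sup>2 - (step n)\<^sup>2 - (dist w (xs (Suc n)))\<^sup>2)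
      \<le> (1 / \<gamma> n) * (2 * Bw * step n)"
    using gamma_pos[of n] by (intro mult_left_mono) simp_all
  with P2 have "(1 / \<gamma> m) * ((dist w (xs (Suc n)))\<^sup>2 + (dist z w)\<^sup>2 - (dist z (xs (Suc n)))\<^sup>2)
      \<le> 2 * Bw * (step n / \<gamma> n)"
    by simp
  then have "(dist w (xs (Suc n)))\<^sup>2 + (dist z w)\<^sup>2 - (dist z (xs (Suc n)))\<^sup>2
      \<le> \<gamma> m * 2 * Bw * (step n / \<gamma> n)"
    using gamma_pos[of m] by (simp add: field_simps)
  with w_shift z_shift show ?thesis
    unfolding w_def by (simp add: algebra_simps)
qed

lemma eventually_power2_dist_image_le:
  assumes fixed: "\<And>n. T n p = p" and not_summable: "\<not> summable (\<lambda>n. (\<gamma> n)\<^sup>2)" and "\<epsilon> > 0"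
  shows "eventually (\<lambda>n. (dist (T m z) (xs n))\<^sup>2 \<le> (dist z (xs n))\<^sup>2 - (dist z (T m z))\<^sup>2 + \<epsilon>)
           sequentially"
proof -
  have bd: "bounded (range xs)"
    using fixed by (rule bounded_iterates)
  obtain Bz where Bz: "\<And>n. dist z (xs n) \<le> Bz"
    using bd unfolding bounded_any_center[of _ z] by blast
  obtain Bw where Bw: "\<And>n. dist (T m z) (xs n) \<le> Bw"
    using bd unfolding bounded_any_center[of _ "T m z"] by blast
  have "(\<lambda>n. (step n)\<^sup>2) \<longlonglongrightarrow> 0"
    using summable_step_power2[OF fixed] by (rule summable_LIMSEQ_zero)
  then have "(\<lambda>n. sqrt ((step n)\<^sup>2)) \<longlonglongrightarrow> sqrt 0"
    by (rule tendsto_real_sqrt)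
  then have step: "step \<longlonglongrightarrow> 0"
    by simp
  have ratio: "(\<lambda>n. step n / \<gamma> n) \<longlonglongrightarrow> 0"
    using summable_step_power2[OF fixed] not_summable by (rule step_ratio_tendsto_zero)
  have "(\<lambda>n. \<gamma> m * 2 * Bw * (step n / \<gamma> n) + 2 * (Bw + Bz) * step n)
      \<longlonglongrightarrow> \<gamma> m * 2 * Bw * 0 + 2 * (Bw + Bz) * 0"
    by (intro tendsto_intros step ratio)
  then have "eventually (\<lambda>n. \<gamma> m * 2 * Bw * (step n / \<gamma> n) + 2 * (Bw + Bz) * step n < \<epsilon>)
      sequentially"
    using \<open>\<epsilon> > 0\<close> by (intro order_tendstoD(2)) auto
  then show ?thesis
  proof eventually_elim
    case (elim n)
    with power2_dist_image_le[OF Bz Bw, of n] show ?case by linarith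
  qed
qed

lemma asymptotic_center_subseq_fixed:
  assumes fixed: "\<And>n. T n p = p" and not_summable: "\<not> summable (\<lambda>n. (\<gamma> n)\<^sup>2)"
    and \<sigma>: "strict_mono \<sigma>" and z: "asymptotic_center (xs \<circ> \<sigma>) z"
  shows "T m z = z"
proof -
  have "bounded (range (xs \<circ> \<sigma>))"
    using bounded_iterates[OF fixed] by (rule bounded_subset) auto
  then obtain R where R: "R \<ge> 0" "limsup (\<lambda>k. ereal (dist z ((xs \<circ> \<sigma>) k))) = ereal R"
    by (rule limsup_dist_finite)
  show ?thesis
  proof (rule ccontr)
    assume "T m z \<noteq> z"
    define D where "D = (dist z (T m z))\<^sup>2"
    have "D > 0"
      using \<open>T m z \<noteq> z\<close> by (simp add: D_def)
    have "D / 2 \<le> 0"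
    proof (rule asymptotic_center_gap_nonpos[OF z R(2) R(1)])
      fix \<epsilon> :: real
      assume "\<epsilon> > 0"
      have "eventually (\<lambda>n. (dist (T m z) (xs n))\<^sup>2 \<le> (dist z (xs n))\<^sup>2 - D / 2) sequentially"
        using eventually_power2_dist_image_le[OF fixed not_summable, of "D / 2" m z] \<open>D > 0\<close>
        by (simp add: D_def)
      then have "eventually (\<lambda>k. (dist (T m z) ((xs \<circ> \<sigma>) k))\<^sup>2
          \<le> (dist z ((xs \<circ> \<sigma>) k))\<^sup>2 - D / 2) sequentially"
        using eventually_compose_filterlim[OF _ filterlim_subseq[OF \<sigma>]] by (simp add: o_def)
      moreover have "eventually (\<lambda>k. (dist z ((xs \<circ> \<sigma>) k))\<^sup>2 \<le> (R + \<epsilon>)\<^sup>2) sequentially"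
        using R(2) \<open>\<epsilon> > 0\<close> by (rule eventually_power2_dist_le_limsup)
      ultimately show "eventually (\<lambda>k. (dist (T m z) ((xs \<circ> \<sigma>) k))\<^sup>2 \<le> (R + \<epsilon>)\<^sup>2 - D / 2)
          sequentially"
        by eventually_elim linarith
    qed
    with \<open>D > 0\<close> show False by simp
  qed
qed

end

theorem theorem3p13:
  fixes T :: "nat \<Rightarrow> 'a::complete_space \<Rightarrow> 'a"
    and \<gamma> :: "nat \<Rightarrow> real" and x :: 'a and xs :: "nat \<Rightarrow> 'a"
  assumes "CAT0 TYPE('a)"
    and "\<And>n. \<gamma> n > 0"
    and "\<not> summable (\<lambda>n. (\<gamma> n)\<^sup>2)"
    and "jointly_P2 T \<gamma>"
    and "(\<Inter>n. Fix (T n)) \<noteq> {}"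
    and "xs 0 = x"
    and "\<And>n. xs (Suc n) = T n (xs n)"
  shows "\<exists>p\<in>(\<Inter>n. Fix (T n)). Delta_converges xs p"
proof -
  interpret P2_iteration T \<gamma> xs
    using assms(2,4,7) by unfold_locales
  have F: "p \<in> (\<Inter>n. Fix (T n)) \<longleftrightarrow> (\<forall>n. T n p = p)" for p
    by (auto simp: Fix_def)
  obtain p0 where p0: "\<And>n. T n p0 = p0"
    using assms(5) F by blast
  show ?thesis
  proof (rule CAT0_Delta_converges_if_Fejer_monotone[OF assms(1) bounded_iterates[OF p0]])
    show "dist p (xs (Suc n)) \<le> dist p (xs n)" if "p \<in> (\<Inter>n. Fix (T n))" for p n
      using that F dist_fixed_point_decreasing by blast
    show "c \<in> (\<Inter>n. Fix (T n))" if "strict_mono \<sigma>" "asymptotic_center (xs \<circ> \<sigma>) c" for \<sigma> c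
      using that F asymptotic_center_subseq_fixed[OF p0 assms(3)] by blast
  qed
qed

end
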